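(* In the linear model setting described in the context, for any $\tau\in[0,1]$, $$\mathcal U(\hat f_\tau)=\tau\sum_{s=1}^Kw_s\Big(\hat b_s-\sum_{s'=1}^Kw_{s'}\hat b_{s'}\Big)^2\quad\text{almost surely.}$$
   Context: Model: $Y=\langle\boldsymbol X,\boldsymbol\beta^*\rangle+b^*_S+\xi$, $\boldsymbol X\sim\mathcal N(\boldsymbol0,\boldsymbol\Sigma)$ with $\boldsymbol\Sigma\succ0$, independent of $S\in[K]$, $\xi\sim\mathcal N(0,\sigma^2)$ independent. Observations: for each $s$, $\boldsymbol Y_s=\mathbf X_s\boldsymbol\beta^*+b^*_s\boldsymbol1_{n_s}+\boldsymbol\xi_s$ ($\mathbf X_s\in\mathbb R^{n_s\times p}$ with i.i.d. $\mathcal N(\boldsymbol0,\boldsymbol\Sigma)$ rows, $\boldsymbol\xi_s$ with i.i.d. $\mathcal N(0,\sigma^2)$ entries, all independent); $n=\sum_sn_s$, $w_s=n_s/n$. $(\hat{\boldsymbol\beta},\hat{\boldsymbol b})\in\arg\min_{(\boldsymbol\beta,\boldsymbol b)}\sum_sw_s\frac1{n_s}\|\boldsymbol Y_s-\mathbf X_s\boldsymbol\beta-b_s\boldsymbol1_{n_s}\|_2^2$ and $\hat f_\tau(\boldsymbol x,s)=\langle\boldsymbol x,\hat{\boldsymbol\beta}\rangle+\sqrt\tau\hat b_s+(1-\sqrt\tau)\sum_{s'}w_{s'}\hat b_{s'}$. Unfairness (with the sample fixed): $\mathcal U(f)=\min_{\nu\in\mathcal P_2(\mathbb R)}\sum_sw_s\mathsf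 W_2^2(\mathrm{Law}(f(\boldsymbol X,s)),\nu)$, $\boldsymbol X\sim\mathcal N(\boldsymbol0,\boldsymbol\Sigma)$, $\mathsf W_2$ the Wasserstein-2 distance. *)

theory Defs
  imports "HOL-Probability.Probability"
begin

definition P2 :: "real measure set" where
  "P2 = {\<nu>. prob_space \<nu> \<and> sets \<nu> = sets borel \<and> (\<integral>\<^sup>+ x. ennreal (x\<^sup>2) \<partial>\<nu>) < \<infinity>}"

definition couplings :: "real measure \<Rightarrow> real measure \<Rightarrow> (real \<times> real) measure set" where
  "couplings \<mu> \<nu> = {\<pi>. prob_space \<pi> \<and> sets \<pi> = sets (borel \<Otimes>\<^sub>M borel)
      \<and> distr \<pi> borel fst = \<mu> \<and> distr \<pi> borel snd = \<nu>}"

definition W2sq :: "real measure \<Rightarrow> real measure \<Rightarrow> ennreal" where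
  "W2sq \<mu> \<nu> = (INF \<pi> \<in> couplings \<mu> \<nu>. \<integral>\<^sup>+ z. ennreal ((fst z - snd z)\<^sup>2) \<partial>\<pi>)"

definition wt :: "('k::finite \<Rightarrow> nat) \<Rightarrow> 'k \<Rightarrow> real" where
  "wt n s = real (n s) / real (\<Sum>s'\<in>UNIV. n s')"

definition unfairness :: "('k::finite \<Rightarrow> real) \<Rightarrow> ('k \<Rightarrow> real measure) \<Rightarrow> ennreal" where
  "unfairness w \<mu> = (INF \<nu> \<in> P2. \<Sum>s\<in>UNIV. ennreal (w s) * W2sq (\<mu> s) \<nu>)"

text \<open>Empirical weighted least-squares objective; row i (i < n s) of X_s is Xd s i.\<close>
definition ls_obj :: "('k::finite \<Rightarrow> nat) \<Rightarrow> ('k \<Rightarrow> nat \<Rightarrow> real^'p) \<Rightarrow> ('k \<Rightarrow> nat \<Rightarrow> real)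
      \<Rightarrow> real^'p \<Rightarrow> ('k \<Rightarrow> real) \<Rightarrow> real" where
  "ls_obj n Xd Y \<beta> b = (\<Sum>s\<in>UNIV. wt n s * (1 / real (n s)) *
      (\<Sum>i<n s. (Y s i - Xd s i \<bullet> \<beta> - b s)\<^sup>2))"

definition f_tau :: "('k::finite \<Rightarrow> nat) \<Rightarrow> real^'p \<Rightarrow> ('k \<Rightarrow> real) \<Rightarrow> real \<Rightarrow> real^'p \<Rightarrow> 'k \<Rightarrow> real" where
  "f_tau n \<beta> b \<tau> x s = x \<bullet> \<beta> + sqrt \<tau> * b s + (1 - sqrt \<tau>) * (\<Sum>s'\<in>UNIV. wt n s' * b s')"

definition gaussian_vec :: "'a measure \<Rightarrow> ('a \<Rightarrow> real^'p) \<Rightarrow> real^'p^'p \<Rightarrow> bool" where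
  "gaussian_vec M X \<Sigma> \<longleftrightarrow> X \<in> borel_measurable M \<and>
     (\<forall>v. v \<noteq> 0 \<longrightarrow> distributed M lborel (\<lambda>\<omega>. v \<bullet> X \<omega>) (normal_density 0 (sqrt (v \<bullet> (\<Sigma> *v v)))))"

end

theory Submission
  imports Defs
begin

text \<open>
  The group laws of \<open>f\<^sub>\<tau>\<close> are translates of the law of the Gaussian, hence square-integrable,
  variable \<open>Z = \<langle>X, \<beta>hat\<rangle>\<close> by \<open>c\<^sub>s = \<surd>\<tau> bhat\<^sub>s + (1 - \<surd>\<tau>) bbar\<close>, where \<open>bbar\<close>
  is the weighted mean of \<open>bhat\<close>.  For translates the barycenter problem is explicit.
  Coupling \<open>Z + c\<^sub>s\<close> with \<open>Z + cbar\<close> costs \<open>(c\<^sub>s - cbar)\<^sup>2\<close>, so the unfairness is at most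
  the weighted variance of \<open>c\<close>.  Conversely \<open>W\<^sub>2\<^sup>2(\<mu>, \<nu>) \<ge> (mean \<mu> - mean \<nu>)\<^sup>2\<close>, because
  the cost of a coupling dominates the squared mean of the difference, and a weighted sum of
  squared deviations from a point is least at the weighted mean.  As \<open>c\<close> is affine in
  \<open>bhat\<close> with slope \<open>\<surd>\<tau>\<close>, its weighted variance is \<open>\<tau>\<close> times that of \<open>bhat\<close>.
\<close>

definition weighted_mean :: "('k::finite \<Rightarrow> real) \<Rightarrow> ('k \<Rightarrow> real) \<Rightarrow> real" where
  "weighted_mean w c = (\<Sum>s\<in>UNIV. w s * c s)"

definition weighted_variance :: "('k::finite \<Rightarrow> real) \<Rightarrow> ('k \<Rightarrow> real) \<Rightarrow> real" where
  "weighted_variance w c = (\<Sum>s\<in>UNIV. w s * (c s - weighted_mean w c)\<^sup>2)"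

lemma weighted_mean_affine:
  assumes "(\<Sum>s\<in>UNIV. w s) = 1"
  shows "weighted_mean w (\<lambda>s. t * c s + a) = t * weighted_mean w c + a"
proof -
  have "weighted_mean w (\<lambda>s. t * c s + a) = (\<Sum>s\<in>UNIV. t * (w s * c s) + a * w s)"
    unfolding weighted_mean_def by (rule sum.cong) (simp_all add: algebra_simps)
  also have "\<dots> = t * weighted_mean w c + a"
    by (simp add: sum.distrib weighted_mean_def sum_distrib_left[symmetric] assms)
  finally show ?thesis .
qed

lemma weighted_variance_affine:
  assumes "(\<Sum>s\<in>UNIV. w s) = 1"
  shows "weighted_variance w (\<lambda>s. t * c s + a) = t\<^sup>2 * weighted_variance w c"
  unfolding weighted_variance_def weighted_mean_affine[OF assms] sum_distrib_left
  by (rule sum.cong[OF refl]) (simp add: power_mult_distrib[symmetric] right_diff_distrib)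

lemma weighted_sum_sq_dev_eq:
  assumes "(\<Sum>s\<in>UNIV. w s) = 1"
  shows "(\<Sum>s\<in>UNIV. w s * (c s - a)\<^sup>2) = weighted_variance w c + (weighted_mean w c - a)\<^sup>2"
proof -
  define m where "m = weighted_mean w c"
  have "(\<Sum>s\<in>UNIV. w s * (c s - a)\<^sup>2)
      = (\<Sum>s\<in>UNIV. w s * (c s - m)\<^sup>2 + 2 * (m - a) * (w s * c s) + (a\<^sup>2 - m\<^sup>2) * w s)"
    by (rule sum.cong) (simp_all add: algebra_simps power2_eq_square)
  also have "\<dots> = weighted_variance w c + 2 * (m - a) * m + (a\<^sup>2 - m\<^sup>2)"
    by (simp add: sum.distrib sum_distrib_left[symmetric] sum_distrib_right[symmetric] assms
        weighted_variance_def m_def weighted_mean_def)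
  also have "\<dots> = weighted_variance w c + (m - a)\<^sup>2"
    by (simp add: algebra_simps power2_eq_square)
  finally show ?thesis
    unfolding m_def .
qed

lemma coupling_cost_ge_mean_diff_sq:
  fixes \<mu> \<nu> :: "real measure"
  assumes coupling: "\<pi> \<in> couplings \<mu> \<nu>"
    and int_\<mu>: "integrable \<mu> (\<lambda>x. x)" and int_\<nu>: "integrable \<nu> (\<lambda>x. x)"
  shows "ennreal ((integral\<^sup>L \<mu> (\<lambda>x. x) - integral\<^sup>L \<nu> (\<lambda>x. x))\<^sup>2)
      \<le> (\<integral>\<^sup>+ z. ennreal ((fst z - snd z)\<^sup>2) \<partial>\<pi>)"
proof -
  have sets_\<pi>: "sets \<pi> = sets (borel \<Otimes>\<^sub>M borel)"
    and \<mu>_eq: "\<mu> = distr \<pi> borel fst" and \<nu>_eq: "\<nu> = distr \<pi> borel snd"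
    using coupling by (auto simp: couplings_def)
  interpret prob_space \<pi>
    using coupling by (simp add: couplings_def)
  have fst_meas[measurable]: "fst \<in> borel_measurable \<pi>" and snd_meas[measurable]: "snd \<in> borel_measurable \<pi>"
    using measurable_cong_sets[OF sets_\<pi> refl, of borel] by auto
  have int_fst: "integrable \<pi> fst"
    using int_\<mu> integrable_distr_eq[OF fst_meas, of "\<lambda>x. x"] by (simp add: \<mu>_eq)
  have int_snd: "integrable \<pi> snd"
    using int_\<nu> integrable_distr_eq[OF snd_meas, of "\<lambda>x. x"] by (simp add: \<nu>_eq)
  have means: "integral\<^sup>L \<mu> (\<lambda>x. x) = expectation fst" "integral\<^sup>L \<nu> (\<lambda>x. x) = expectation snd"
    using integral_distr[OF fst_meas, of "\<lambda>x. x"] integral_distr[OF snd_meas, of "\<lambda>x. x"]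
    by (simp_all add: \<mu>_eq \<nu>_eq)
  let ?d = "\<lambda>z. fst z - snd z"
  show ?thesis
  proof (cases "(\<integral>\<^sup>+ z. ennreal ((?d z)\<^sup>2) \<partial>\<pi>) = \<infinity>")
    case False
    have int_d2: "integrable \<pi> (\<lambda>z. (?d z)\<^sup>2)"
      using False by (intro integrableI_nonneg) (auto simp: less_top)
    have int_d: "integrable \<pi> ?d"
      using int_fst int_snd by simp
    have "(expectation ?d)\<^sup>2 \<le> expectation (\<lambda>z. (?d z)\<^sup>2)"
      using variance_eq[OF int_d int_d2] variance_positive[of ?d] by simp
    moreover have "expectation ?d = expectation fst - expectation snd"
      using int_fst int_snd by simp
    moreover have "(\<integral>\<^sup>+ z. ennreal ((?d z)\<^sup>2) \<partial>\<pi>) = ennreal (expectation (\<lambda>z. (?d z)\<^sup>2))"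
      using int_d2 by (intro nn_integral_eq_integral) auto
    ultimately show ?thesis
      by (simp add: means ennreal_leI)
  qed simp
qed

lemma W2sq_ge_mean_diff_sq:
  fixes \<mu> \<nu> :: "real measure"
  assumes "integrable \<mu> (\<lambda>x. x)" "integrable \<nu> (\<lambda>x. x)"
  shows "ennreal ((integral\<^sup>L \<mu> (\<lambda>x. x) - integral\<^sup>L \<nu> (\<lambda>x. x))\<^sup>2) \<le> W2sq \<mu> \<nu>"
  unfolding W2sq_def using coupling_cost_ge_mean_diff_sq[OF _ assms] by (rule INF_greatest)

lemma P2_integrable:
  assumes "\<nu> \<in> P2"
  shows "integrable \<nu> (\<lambda>x. x)"
proof -
  interpret prob_space \<nu>
    using assms by (simp add: P2_def)
  have id_meas: "(\<lambda>x. x) \<in> borel_measurable \<nu>"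
    using assms measurable_ident_sets[of \<nu> borel] by (simp add: P2_def)
  have "integrable \<nu> (\<lambda>x. x\<^sup>2)"
    using assms id_meas by (intro integrableI_nonneg) (auto simp: P2_def)
  then show ?thesis
    using square_integrable_imp_integrable[OF id_meas] by simp
qed

lemma sum_ennreal_mult:
  assumes "\<And>s. s \<in> A \<Longrightarrow> 0 \<le> f s" and "\<And>s. s \<in> A \<Longrightarrow> 0 \<le> g s"
  shows "(\<Sum>s\<in>A. ennreal (f s) * ennreal (g s)) = ennreal (\<Sum>s\<in>A. f s * g s)"
  using assms by (subst sum_ennreal[symmetric]) (auto simp: ennreal_mult'')

context prob_space
begin

lemma distr_in_P2:
  assumes [measurable]: "Z \<in> borel_measurable M" and "integrable M (\<lambda>\<omega>. (Z \<omega>)\<^sup>2)"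
  shows "distr M borel Z \<in> P2"
proof -
  have "(\<integral>\<^sup>+ x. ennreal (x\<^sup>2) \<partial>distr M borel Z) = (\<integral>\<^sup>+ \<omega>. ennreal ((Z \<omega>)\<^sup>2) \<partial>M)"
    by (simp add: nn_integral_distr)
  also have "\<dots> < \<infinity>"
    using integrableD(2)[OF assms(2)] by (simp add: less_top)
  finally show ?thesis
    by (simp add: P2_def prob_space_distr)
qed

lemma W2sq_translates_le:
  assumes [measurable]: "Z \<in> borel_measurable M"
  shows "W2sq (distr M borel (\<lambda>\<omega>. Z \<omega> + a)) (distr M borel (\<lambda>\<omega>. Z \<omega> + b)) \<le> ennreal ((a - b)\<^sup>2)"
proof -
  have pair_meas: "(\<lambda>\<omega>. (Z \<omega> + a, Z \<omega> + b)) \<in> measurable M (borel \<Otimes>\<^sub>M borel)"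
    by measurable
  define \<pi> where "\<pi> = distr M (borel \<Otimes>\<^sub>M borel) (\<lambda>\<omega>. (Z \<omega> + a, Z \<omega> + b))"
  have "\<pi> \<in> couplings (distr M borel (\<lambda>\<omega>. Z \<omega> + a)) (distr M borel (\<lambda>\<omega>. Z \<omega> + b))"
    unfolding couplings_def \<pi>_def
    by (auto intro!: prob_space_distr simp: distr_distr[OF _ pair_meas] comp_def)
  moreover have "(\<integral>\<^sup>+ z. ennreal ((fst z - snd z)\<^sup>2) \<partial>\<pi>) = (\<integral>\<^sup>+ \<omega>. ennreal ((a - b)\<^sup>2) \<partial>M)"
    unfolding \<pi>_def by (subst nn_integral_distr[OF pair_meas]) simp_all
  ultimately show ?thesis
    unfolding W2sq_def by (intro INF_lower2[of \<pi>]) (simp_all add: emeasure_space_1)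
qed

lemma unfairness_translates_le:
  assumes [measurable]: "Z \<in> borel_measurable M" and "integrable M (\<lambda>\<omega>. (Z \<omega>)\<^sup>2)"
    and w_nonneg: "\<forall>s. 0 \<le> w s"
  shows "unfairness w (\<lambda>s. distr M borel (\<lambda>\<omega>. Z \<omega> + c s)) \<le> ennreal (weighted_variance w c)"
proof -
  define m where "m = weighted_mean w c"
  have "integrable M (\<lambda>\<omega>. (Z \<omega> + m)\<^sup>2)"
    using assms(2) square_integrable_imp_integrable[OF assms(1,2)]
    by (simp add: power2_sum)
  then have barycenter: "distr M borel (\<lambda>\<omega>. Z \<omega> + m) \<in> P2"
    by (intro distr_in_P2) simp_all
  have "unfairness w (\<lambda>s. distr M borel (\<lambda>\<omega>. Z \<omega> + c s))
      \<le> (\<Sum>s\<in>UNIV. ennreal (w s) * W2sq (distr M borel (\<lambda>\<omega>. Z \<omega> + c s)) (distr M borel (\<lambda>\<omega>. Z \<omega> + m)))"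
    unfolding unfairness_def using barycenter by (rule INF_lower)
  also have "\<dots> \<le> (\<Sum>s\<in>UNIV. ennreal (w s) * ennreal ((c s - m)\<^sup>2))"
    by (intro sum_mono mult_left_mono W2sq_translates_le) simp_all
  also have "\<dots> = ennreal (weighted_variance w c)"
    using w_nonneg by (simp add: weighted_variance_def m_def sum_ennreal_mult)
  finally show ?thesis .
qed

lemma weighted_variance_le_unfairness_translates:
  assumes [measurable]: "Z \<in> borel_measurable M" and int_Z: "integrable M Z"
    and w_nonneg: "\<forall>s. 0 \<le> w s" and w_sum: "(\<Sum>s\<in>UNIV. w s) = 1"
  shows "ennreal (weighted_variance w c) \<le> unfairness w (\<lambda>s. distr M borel (\<lambda>\<omega>. Z \<omega> + c s))"
  unfolding unfairness_def
proof (rule INF_greatest)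
  fix \<nu> assume "\<nu> \<in> P2"
  define a where "a = integral\<^sup>L \<nu> (\<lambda>x. x) - expectation Z"
  have W2sq_lower: "ennreal ((c s - a)\<^sup>2) \<le> W2sq (distr M borel (\<lambda>\<omega>. Z \<omega> + c s)) \<nu>" for s
  proof -
    have int_s: "integrable (distr M borel (\<lambda>\<omega>. Z \<omega> + c s)) (\<lambda>x. x)"
      using int_Z by (subst integrable_distr_eq) auto
    have mean_s: "integral\<^sup>L (distr M borel (\<lambda>\<omega>. Z \<omega> + c s)) (\<lambda>x. x) = expectation Z + c s"
      using int_Z by (subst integral_distr) (auto simp: prob_space)
    from W2sq_ge_mean_diff_sq[OF int_s P2_integrable[OF \<open>\<nu> \<in> P2\<close>]] show ?thesis
      by (simp add: mean_s a_def algebra_simps)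
  qed
  have "ennreal (weighted_variance w c) \<le> ennreal (\<Sum>s\<in>UNIV. w s * (c s - a)\<^sup>2)"
    using weighted_sum_sq_dev_eq[OF w_sum, of c a] by (intro ennreal_leI) simp
  also have "\<dots> = (\<Sum>s\<in>UNIV. ennreal (w s) * ennreal ((c s - a)\<^sup>2))"
    using w_nonneg by (simp add: sum_ennreal_mult)
  also have "\<dots> \<le> (\<Sum>s\<in>UNIV. ennreal (w s) * W2sq (distr M borel (\<lambda>\<omega>. Z \<omega> + c s)) \<nu>)"
    by (intro sum_mono mult_left_mono W2sq_lower) simp
  finally show "ennreal (weighted_variance w c)
      \<le> (\<Sum>s\<in>UNIV. ennreal (w s) * W2sq (distr M borel (\<lambda>\<omega>. Z \<omega> + c s)) \<nu>)" .
qed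

lemma unfairness_translates:
  assumes "Z \<in> borel_measurable M" and "integrable M (\<lambda>\<omega>. (Z \<omega>)\<^sup>2)"
    and "\<forall>s. 0 \<le> w s" and "(\<Sum>s\<in>UNIV. w s) = 1"
  shows "unfairness w (\<lambda>s. distr M borel (\<lambda>\<omega>. Z \<omega> + c s)) = ennreal (weighted_variance w c)"
proof (rule antisym)
  show "unfairness w (\<lambda>s. distr M borel (\<lambda>\<omega>. Z \<omega> + c s)) \<le> ennreal (weighted_variance w c)"
    using assms(1-3) by (rule unfairness_translates_le)
  have "integrable M Z"
    using assms(1,2) by (rule square_integrable_imp_integrable)
  with assms(1,3,4) show "ennreal (weighted_variance w c) \<le> unfairness w (\<lambda>s. distr M borel (\<lambda>\<omega>. Z \<omega> + c s))"
    by (intro weighted_variance_le_unfairness_translates)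
qed

end

lemma gaussian_vec_inner_square_integrable:
  assumes gauss: "gaussian_vec M X \<Sigma>" and pos_def: "\<forall>v. v \<noteq> 0 \<longrightarrow> v \<bullet> (\<Sigma> *v v) > 0"
  shows "integrable M (\<lambda>\<omega>. (X \<omega> \<bullet> v)\<^sup>2)"
proof (cases "v = 0")
  case False
  define \<sigma> where "\<sigma> = sqrt (v \<bullet> (\<Sigma> *v v))"
  have distributed: "distributed M lborel (\<lambda>\<omega>. v \<bullet> X \<omega>) (normal_density 0 \<sigma>)"
    using gauss False unfolding gaussian_vec_def \<sigma>_def by blast
  have "0 < \<sigma>"
    using pos_def False by (simp add: \<sigma>_def)
  then have "integrable lborel (\<lambda>x. normal_density 0 \<sigma> x * x\<^sup>2)"
    using integrable_normal_moment[where \<mu>=0 and \<sigma>=\<sigma> and k=2] by simp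
  then show ?thesis
    using distributed_integrable[OF distributed, of "\<lambda>x. x\<^sup>2"] by (simp add: inner_commute)
qed simp

lemma wt_nonneg: "0 \<le> wt n s"
  unfolding wt_def by (intro divide_nonneg_nonneg) (simp_all add: sum_nonneg)

lemma sum_wt_eq_1:
  assumes "0 < n s"
  shows "(\<Sum>s\<in>UNIV. wt n s) = 1"
proof -
  have "real (n s) \<le> (\<Sum>s\<in>UNIV. real (n s))"
    by (rule member_le_sum) simp_all
  with assms have "0 < (\<Sum>s\<in>UNIV. real (n s))"
    by linarith
  then show ?thesis
    by (simp add: wt_def sum_divide_distrib[symmetric])
qed

theorem lemma3:
  fixes M :: "'a measure"
    and X :: "'a \<Rightarrow> real^'p"
    and \<Sigma> :: "real^'p^'p"
    and n :: "'k::finite \<Rightarrow> nat"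
    and Xd :: "'k \<Rightarrow> nat \<Rightarrow> real^'p"
    and \<beta>star :: "real^'p" and bstar :: "'k \<Rightarrow> real"
    and \<xi> :: "'k \<Rightarrow> nat \<Rightarrow> real"
    and Y :: "'k \<Rightarrow> nat \<Rightarrow> real"
    and \<beta>hat :: "real^'p" and bhat :: "'k \<Rightarrow> real"
    and \<tau> :: real
  assumes "prob_space M"
    and "transpose \<Sigma> = \<Sigma>"
    and "\<forall>v. v \<noteq> 0 \<longrightarrow> v \<bullet> (\<Sigma> *v v) > 0"
    and "gaussian_vec M X \<Sigma>"
    and "\<forall>s. n s > 0"
    and "\<forall>s i. Y s i = Xd s i \<bullet> \<beta>star + bstar s + \<xi> s i"
    and "\<forall>\<beta> b. ls_obj n Xd Y \<beta>hat bhat \<le> ls_obj n Xd Y \<beta> b"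
    and "0 \<le> \<tau>" and "\<tau> \<le> 1"
  shows "unfairness (wt n) (\<lambda>s. distr M borel (\<lambda>\<omega>. f_tau n \<beta>hat bhat \<tau> (X \<omega>) s))
       = ennreal (\<tau> * (\<Sum>s\<in>UNIV. wt n s * (bhat s - (\<Sum>s'\<in>UNIV. wt n s' * bhat s'))\<^sup>2))"
proof -
  have w_sum: "(\<Sum>s\<in>UNIV. wt n s) = 1"
    using assms(5) sum_wt_eq_1 by blast
  have [measurable]: "X \<in> borel_measurable M"
    using assms(4) by (simp add: gaussian_vec_def)
  define c where "c = (\<lambda>s. sqrt \<tau> * bhat s + (1 - sqrt \<tau>) * weighted_mean (wt n) bhat)"
  have "unfairness (wt n) (\<lambda>s. distr M borel (\<lambda>\<omega>. f_tau n \<beta>hat bhat \<tau> (X \<omega>) s))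
      = unfairness (wt n) (\<lambda>s. distr M borel (\<lambda>\<omega>. X \<omega> \<bullet> \<beta>hat + c s))"
    unfolding f_tau_def c_def weighted_mean_def by (simp only: add.assoc)
  also have "\<dots> = ennreal (weighted_variance (wt n) c)"
    using wt_nonneg w_sum
    by (intro prob_space.unfairness_translates[OF assms(1)] gaussian_vec_inner_square_integrable[OF assms(4,3)])
      auto
  also have "\<dots> = ennreal (\<tau> * weighted_variance (wt n) bhat)"
    unfolding c_def weighted_variance_affine[OF w_sum] using assms(8) by simp
  finally show ?thesis
    unfolding weighted_variance_def weighted_mean_def .
qed

end
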